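(* Let $U^{(1)},\dots,U^{(L)}$ be $d\times d$ unitary matrices, and let $|u^{(j)}_i\rangle$ denote the $i$-th column of $U^{(j)}$. For $k=0,1,\dots,dL-1$ let $$\mathcal{S}_k=\max\ \sigma_1^2\big(|u^{(j_1)}_{i_1}\rangle,\dots,|u^{(j_{k+1})}_{i_{k+1}}\rangle\big),$$ the maximum over all subsets $\{(i_1,j_1),\dots,(i_{k+1},j_{k+1})\}$ of cardinality $k+1$ of $\{1,\dots,d\}\times\{1,\dots,L\}$, where $\sigma_1(\cdot)$ is the largest singular value of the $d\times(k+1)$ matrix with the listed columns. For a unit vector $|\psi\rangle\in\mathbb{C}^d$ put $p^{(j)}_i=|\langle u^{(j)}_i|\psi\rangle|^2$. Then $$\{p^{(j)}_i\}_{i,j=1}^{d,L}\prec(1,\mathcal{S}_1-1,\mathcal{S}_2-\mathcal{S}_1,\dots,\mathcal{S}_{dL-1}-\mathcal{S}_{dL-2}),$$ and consequently $$\sum_{j=1}^L H\big(p^{(j)}\big)\ge-\sum_{i=1}^{dL-1}(\mathcal{S}_i-\mathcal{S}_{i-1})\ln(\mathcal{S}_i-\mathcal{S}_{i-1}).$$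
   Context: $H(x)=-\sum_i x_i\ln x_i$ is the Shannon entropy with $0\ln0=0$. For nonnegative vectors $x,y$ of the same length, $x\prec y$ means $\sum_{k=1}^n x^{\downarrow}_k\le\sum_{k=1}^n y^{\downarrow}_k$ for all $n$, with equality of total sums, where $x^{\downarrow}$ is $x$ sorted in decreasing order. Note $\mathcal{S}_0=1$. *)

theory Defs
  imports "HOL-Analysis.Analysis" "HOL-Library.Multiset"
begin

definition unitary_mat :: "complex^'n^'n \<Rightarrow> bool" where
  "unitary_mat U \<longleftrightarrow>
     (\<forall>i k. (\<Sum>m\<in>UNIV. cnj (U$m$i) * U$m$k) = (if i = k then 1 else 0))"

definition braket :: "complex^'n \<Rightarrow> complex^'n \<Rightarrow> complex" where
  "braket u v = (\<Sum>m\<in>UNIV. cnj (u$m) * v$m)"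

text \<open>Square of the largest singular value sigma_1 of the d x |T| matrix whose
  columns are v t, t in T, i.e. the squared spectral (operator 2-) norm.\<close>
definition sigma1_sq :: "('a \<Rightarrow> complex^'n) \<Rightarrow> 'a set \<Rightarrow> real" where
  "sigma1_sq v T = Sup { (norm (\<chi> m. \<Sum>t\<in>T. c t * (v t)$m))^2 | c.
                         (\<Sum>t\<in>T. (cmod (c t))^2) = 1 }"

definition majorized :: "real list \<Rightarrow> real list \<Rightarrow> bool" where
  "majorized xs ys \<longleftrightarrow> length xs = length ys \<and>
     (\<forall>n\<le>length xs. sum_list (take n (rev (sort xs))) \<le> sum_list (take n (rev (sort ys)))) \<and>
     sum_list xs = sum_list ys"

text \<open>Shannon entropy; note ln 0 = 0 in Isabelle so 0 ln 0 = 0.\<close>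
definition shannon_H :: "('a \<Rightarrow> real) \<Rightarrow> 'a set \<Rightarrow> real" where
  "shannon_H p A = - (\<Sum>i\<in>A. p i * ln (p i))"

definition calS :: "(nat \<Rightarrow> complex^'n^'n) \<Rightarrow> nat \<Rightarrow> nat \<Rightarrow> real" where
  "calS U L k = Max { sigma1_sq (\<lambda>(i,j). column i (U j)) T | T.
                       T \<subseteq> (UNIV :: 'n set) \<times> {..<L} \<and> card T = k + 1 }"

end

theory Submission
  imports Defs
begin

text \<open>Write \<open>p\<close> for the weights \<open>|\<langle>u|psi\<rangle>|\<^sup>2\<close>. For any \<open>k + 1\<close> of the columns, their unit
  combination with coefficients proportional to the overlaps with \<open>psi\<close> has inner product
  \<open>sqrt s\<close> with \<open>psi\<close>, where \<open>s\<close> is the sum of their weights; by Cauchy--Schwarz,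
  \<open>s \<le> \<sigma>\<^sub>1\<^sup>2 \<le> S k\<close>. So the \<open>k + 1\<close> largest weights sum to at most \<open>S k\<close>, the corresponding
  partial sum of the right-hand vector. The totals agree: the weights sum to \<open>L\<close> by Parseval for
  each unitary, and \<open>S (dL - 1)\<close> is \<open>\<sigma>\<^sub>1\<^sup>2\<close> of all \<open>dL\<close> columns, which is at least \<open>L\<close> by the
  bound just described, and at most \<open>L\<close>: a unit combination of all columns is a sum of \<open>L\<close>
  vectors \<open>U\<^sub>j c\<^sub>j\<close> with \<open>\<Sum>\<^sub>j |c\<^sub>j|\<^sup>2 = 1\<close>, so by Cauchy--Schwarz its norm is at most \<open>sqrt L\<close>.
  The entropy bound is Karamata's inequality for the convex function \<open>x ln x\<close>.\<close>

lemma power2_norm_vec: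
  fixes x :: "'a::real_normed_vector^'n"
  shows "(norm x)\<^sup>2 = (\<Sum>i\<in>UNIV. (norm (x$i))\<^sup>2)"
  unfolding norm_vec_def L2_set_def by (simp add: sum_nonneg)

lemma norm_vector_smult: "norm (c *s (x::complex^'n)) = cmod c * norm x"
proof -
  have "(norm (c *s x))\<^sup>2 = (cmod c * norm x)\<^sup>2"
    by (simp add: power2_norm_vec norm_mult power_mult_distrib sum_distrib_left)
  thus ?thesis by (simp add: power2_eq_iff_nonneg)
qed

lemma vec_lambda_sum_eq_sum_vector_smult:
  "(\<chi> m. \<Sum>t\<in>T. c t * v t $ m) = (\<Sum>t\<in>T. c t *s (v t :: 'a::semiring_0^'n))"
  by (simp add: vec_eq_iff)

lemma braket_sum_vector_smult:
  "braket u (\<Sum>t\<in>T. c t *s v t) = (\<Sum>t\<in>T. c t * braket u (v t))"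
  by (simp add: braket_def sum_distrib_left mult_ac sum.swap[of _ T])

lemma braket_swap: "braket v u = cnj (braket u v)"
  by (simp add: braket_def mult.commute)

lemma norm_braket_le: "cmod (braket u v) \<le> norm u * norm v"
proof -
  have "cmod (braket u v) \<le> (\<Sum>m\<in>UNIV. \<bar>cmod (u$m)\<bar> * \<bar>cmod (v$m)\<bar>)"
    unfolding braket_def by (rule order_trans[OF norm_sum]) (simp add: norm_mult)
  also have "\<dots> \<le> L2_set (\<lambda>m. cmod (u$m)) UNIV * L2_set (\<lambda>m. cmod (v$m)) UNIV"
    by (rule L2_set_mult_ineq)
  finally show ?thesis by (simp add: norm_vec_def)
qed

definition conj_transpose :: "complex^'n^'m \<Rightarrow> complex^'m^'n" where
  "conj_transpose A = (\<chi> i j. cnj (A$j$i))"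

lemma unitary_mat_iff_conj_transpose: "unitary_mat A \<longleftrightarrow> conj_transpose A ** A = mat 1"
  by (simp add: unitary_mat_def matrix_matrix_mult_def mat_def vec_eq_iff conj_transpose_def)

lemma unitary_mat_conj_transpose:
  assumes "unitary_mat A"
  shows "unitary_mat (conj_transpose A)"
proof -
  have "conj_transpose (conj_transpose A) = A"
    by (simp add: conj_transpose_def vec_eq_iff)
  with assms show ?thesis
    unfolding unitary_mat_iff_conj_transpose using matrix_left_right_inverse by metis
qed

lemma unitary_mat_norm_preserving:
  assumes "unitary_mat (A::complex^'n^'n)"
  shows "norm (A *v x) = norm x"
proof -
  have orth: "(\<Sum>m\<in>UNIV. cnj (A$m$k) * A$m$i) = (if k = i then 1 else 0)" for i k
    using assms unfolding unitary_mat_def by blast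
  have "complex_of_real ((norm (A *v x))\<^sup>2)
     = (\<Sum>m\<in>UNIV. (\<Sum>i\<in>UNIV. A$m$i * x$i) * cnj (\<Sum>k\<in>UNIV. A$m$k * x$k))"
    by (simp only: power2_norm_vec of_real_sum complex_norm_square)
       (simp add: matrix_vector_mult_def)
  also have "\<dots> = (\<Sum>m\<in>UNIV. \<Sum>i\<in>UNIV. \<Sum>k\<in>UNIV. (A$m$i * x$i) * cnj (A$m$k * x$k))"
    by (simp add: sum_product)
  also have "\<dots> = (\<Sum>i\<in>UNIV. \<Sum>k\<in>UNIV. \<Sum>m\<in>UNIV. (A$m$i * x$i) * cnj (A$m$k * x$k))"
    by (subst sum.swap) (rule sum.cong[OF refl], rule sum.swap)
  also have "\<dots> = (\<Sum>i\<in>UNIV. \<Sum>k\<in>UNIV. x$i * cnj (x$k) * (\<Sum>m\<in>UNIV. cnj (A$m$k) * A$m$i))"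
    by (simp add: sum_distrib_left mult_ac)
  also have "\<dots> = (\<Sum>i\<in>UNIV. x$i * cnj (x$i))"
    by (simp add: orth if_distrib sum.delta cong: if_cong)
  also have "\<dots> = complex_of_real ((norm x)\<^sup>2)"
    by (simp only: power2_norm_vec of_real_sum complex_norm_square)
  finally have "(norm (A *v x))\<^sup>2 = (norm x)\<^sup>2"
    using of_real_eq_iff by blast
  thus ?thesis
    by (simp add: power2_eq_iff_nonneg)
qed

lemma unitary_mat_column_norm:
  assumes "unitary_mat (A::complex^'n^'n)"
  shows "norm (column i A) = 1"
proof -
  have "column i A = A *v axis i 1"
    by (simp add: vec_eq_iff matrix_vector_mult_def column_def axis_def if_distrib cong: if_cong)
  moreover have "norm (axis i (1::complex)) = 1"
  proof -
    have "(\<Sum>j\<in>UNIV. (cmod (axis i (1::complex) $ j))\<^sup>2) = (\<Sum>j\<in>UNIV. if j = i then 1 else 0)"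
      by (rule sum.cong) (auto simp: axis_def)
    thus ?thesis by (simp add: norm_vec_def L2_set_def)
  qed
  ultimately show ?thesis
    by (simp add: unitary_mat_norm_preserving[OF assms])
qed

lemma unitary_mat_parseval:
  assumes "unitary_mat (U::complex^'n^'n)"
  shows "(\<Sum>i\<in>UNIV. (cmod (braket (column i U) psi))\<^sup>2) = (norm psi)\<^sup>2"
proof -
  have "braket (column i U) psi = (conj_transpose U *v psi) $ i" for i
    by (simp add: braket_def column_def conj_transpose_def matrix_vector_mult_def)
  hence "(\<Sum>i\<in>UNIV. (cmod (braket (column i U) psi))\<^sup>2) = (norm (conj_transpose U *v psi))\<^sup>2"
    by (simp add: power2_norm_vec)
  thus ?thesis
    by (simp add: unitary_mat_norm_preserving[OF unitary_mat_conj_transpose[OF assms]])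
qed

section \<open>The largest singular value\<close>

definition unit_combination_sqnorms :: "('a \<Rightarrow> complex^'n) \<Rightarrow> 'a set \<Rightarrow> real set" where
  "unit_combination_sqnorms v T =
     {(norm (\<Sum>t\<in>T. c t *s v t))\<^sup>2 | c. (\<Sum>t\<in>T. (cmod (c t))\<^sup>2) = 1}"

lemma sigma1_sq_eq_Sup: "sigma1_sq v T = Sup (unit_combination_sqnorms v T)"
  by (simp add: sigma1_sq_def unit_combination_sqnorms_def vec_lambda_sum_eq_sum_vector_smult)

lemma unit_coefficients_bounded:
  assumes "finite T" "(\<Sum>t\<in>T. (cmod (c t))\<^sup>2) = 1" "t \<in> T"
  shows "cmod (c t) \<le> 1"
proof -
  have "(cmod (c t))\<^sup>2 \<le> 1"
    using assms member_le_sum[of t T "\<lambda>t. (cmod (c t))\<^sup>2"] by simp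
  thus ?thesis by (simp add: abs_square_le_1)
qed

lemma bdd_above_unit_combination_sqnorms:
  assumes "finite T"
  shows "bdd_above (unit_combination_sqnorms v T)"
proof (rule bdd_aboveI)
  fix x assume "x \<in> unit_combination_sqnorms v T"
  then obtain c where c: "(\<Sum>t\<in>T. (cmod (c t))\<^sup>2) = 1" and x: "x = (norm (\<Sum>t\<in>T. c t *s v t))\<^sup>2"
    unfolding unit_combination_sqnorms_def by blast
  have "norm (\<Sum>t\<in>T. c t *s v t) \<le> (\<Sum>t\<in>T. cmod (c t) * norm (v t))"
    by (rule order_trans[OF norm_sum]) (simp add: norm_vector_smult)
  also have "\<dots> \<le> (\<Sum>t\<in>T. norm (v t))"
    using unit_coefficients_bounded[OF assms c]
    by (intro sum_mono) (simp add: mult_left_le_one_le)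
  finally show "x \<le> (\<Sum>t\<in>T. norm (v t))\<^sup>2"
    unfolding x by (simp add: power_mono)
qed

lemma unit_combination_sqnorms_nonempty:
  assumes "finite T" "t0 \<in> T"
  shows "(norm (v t0))\<^sup>2 \<in> unit_combination_sqnorms v T"
proof -
  define c where "c t = (if t = t0 then 1 else 0 :: complex)" for t
  have "(\<Sum>t\<in>T. (cmod (c t))\<^sup>2) = (\<Sum>t\<in>T. if t = t0 then 1 else 0)"
    "(\<Sum>t\<in>T. c t *s v t) = (\<Sum>t\<in>T. if t = t0 then v t0 else 0)"
    by (rule sum.cong; simp add: c_def)+
  hence "(\<Sum>t\<in>T. (cmod (c t))\<^sup>2) = 1" "(\<Sum>t\<in>T. c t *s v t) = v t0"
    using assms by simp_all
  thus ?thesis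
    unfolding unit_combination_sqnorms_def by (intro CollectI exI[of _ c]) simp
qed

lemma sqnorm_le_sigma1_sq:
  assumes "finite T" "(\<Sum>t\<in>T. (cmod (c t))\<^sup>2) = 1"
  shows "(norm (\<Sum>t\<in>T. c t *s v t))\<^sup>2 \<le> sigma1_sq v T"
  unfolding sigma1_sq_eq_Sup
  by (rule cSup_upper[OF _ bdd_above_unit_combination_sqnorms[OF assms(1)]])
     (use assms(2) in \<open>auto simp: unit_combination_sqnorms_def\<close>)

lemma sigma1_sq_nonneg:
  assumes "finite T" "T \<noteq> {}"
  shows "0 \<le> sigma1_sq v T"
proof -
  obtain t0 where "t0 \<in> T" using assms(2) by blast
  thus ?thesis
    unfolding sigma1_sq_eq_Sup using assms(1)
    by (intro cSup_upper2[OF unit_combination_sqnorms_nonempty _ bdd_above_unit_combination_sqnorms])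
       auto
qed

lemma sigma1_sq_mono:
  assumes "T \<subseteq> T'" "finite T'" "T \<noteq> {}"
  shows "sigma1_sq v T \<le> sigma1_sq v T'"
  unfolding sigma1_sq_eq_Sup
proof (rule cSup_mono)
  obtain t0 where "t0 \<in> T" using assms(3) by blast
  with finite_subset[OF assms(1,2)] show "unit_combination_sqnorms v T \<noteq> {}"
    using unit_combination_sqnorms_nonempty by fast
  show "bdd_above (unit_combination_sqnorms v T')"
    by (rule bdd_above_unit_combination_sqnorms[OF assms(2)])
  fix x assume "x \<in> unit_combination_sqnorms v T"
  then obtain c where c: "(\<Sum>t\<in>T. (cmod (c t))\<^sup>2) = 1" and x: "x = (norm (\<Sum>t\<in>T. c t *s v t))\<^sup>2"
    unfolding unit_combination_sqnorms_def by blast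
  define c' where "c' t = (if t \<in> T then c t else 0)" for t
  have "(\<Sum>t\<in>T'. (cmod (c' t))\<^sup>2) = (\<Sum>t\<in>T. (cmod (c t))\<^sup>2)"
    by (rule sum.mono_neutral_cong_right) (use assms(1,2) in \<open>auto simp: c'_def\<close>)
  moreover have "(\<Sum>t\<in>T'. c' t *s v t) = (\<Sum>t\<in>T. c t *s v t)"
    by (rule sum.mono_neutral_cong_right) (use assms(1,2) in \<open>auto simp: c'_def\<close>)
  ultimately have "x \<in> unit_combination_sqnorms v T'"
    unfolding unit_combination_sqnorms_def x using c by (intro CollectI exI[of _ c']) simp
  thus "\<exists>y\<in>unit_combination_sqnorms v T'. x \<le> y" by blast
qed

lemma sigma1_sq_singleton: "sigma1_sq v {t} = (norm (v t))\<^sup>2"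
proof -
  have "unit_combination_sqnorms v {t} = {(norm (v t))\<^sup>2}"
  proof
    show "unit_combination_sqnorms v {t} \<subseteq> {(norm (v t))\<^sup>2}"
      by (auto simp: unit_combination_sqnorms_def norm_vector_smult power_mult_distrib)
    show "{(norm (v t))\<^sup>2} \<subseteq> unit_combination_sqnorms v {t}"
      using unit_combination_sqnorms_nonempty[of "{t}" t v] by simp
  qed
  thus ?thesis by (simp add: sigma1_sq_eq_Sup)
qed

lemma sum_sqnorm_braket_le_sigma1_sq:
  assumes "finite T" "T \<noteq> {}" "norm psi = 1"
  shows "(\<Sum>t\<in>T. (cmod (braket (v t) psi))\<^sup>2) \<le> sigma1_sq v T"
proof -
  define b where "b t = braket (v t) psi" for t
  define s where "s = (\<Sum>t\<in>T. (cmod (b t))\<^sup>2)"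
  have s0: "s \<ge> 0" by (simp add: s_def sum_nonneg)
  show ?thesis
  proof (cases "s = 0")
    case True
    thus ?thesis using sigma1_sq_nonneg[OF assms(1,2)] by (simp add: s_def b_def)
  next
    case False
    hence spos: "s > 0" using s0 by simp
    define c where "c t = b t / sqrt s" for t
    define w where "w = (\<Sum>t\<in>T. c t *s v t)"
    have c_unit: "(\<Sum>t\<in>T. (cmod (c t))\<^sup>2) = 1"
      using spos by (simp add: c_def norm_divide power_divide s_def flip: sum_divide_distrib)
    have "braket psi w = (\<Sum>t\<in>T. b t * cnj (b t)) / sqrt s"
      by (simp add: w_def braket_sum_vector_smult braket_swap[of psi] c_def b_def
                    sum_divide_distrib mult.commute)
    also have "(\<Sum>t\<in>T. b t * cnj (b t)) = of_real s"
      by (simp only: s_def of_real_sum complex_norm_square)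
    also have "of_real s / of_real (sqrt s) = (of_real (sqrt s) :: complex)"
      using s0 by (simp add: real_div_sqrt flip: of_real_divide)
    finally have "sqrt s \<le> norm w"
      using norm_braket_le[of psi w] assms(3) by simp
    hence "s \<le> (norm w)\<^sup>2"
      using s0 by (metis real_sqrt_le_iff sqrt_le_D)
    also have "\<dots> \<le> sigma1_sq v T"
      unfolding w_def by (rule sqnorm_le_sigma1_sq[OF assms(1) c_unit])
    finally show ?thesis by (simp add: s_def b_def)
  qed
qed

lemma sigma1_sq_columns_le:
  fixes U :: "nat \<Rightarrow> complex^'n^'n"
  assumes "L \<ge> 1" "\<And>j. j < L \<Longrightarrow> unitary_mat (U j)"
  shows "sigma1_sq (\<lambda>(i,j). column i (U j)) (UNIV \<times> {..<L}) \<le> real L"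
  unfolding sigma1_sq_eq_Sup
proof (rule cSup_least)
  show "unit_combination_sqnorms (\<lambda>(i,j). column i (U j)) (UNIV \<times> {..<L}) \<noteq> {}"
    using unit_combination_sqnorms_nonempty[of "UNIV \<times> {..<L}" "(undefined, 0)"
            "\<lambda>(i,j). column i (U j)"] assms(1)
    by auto
  fix x assume "x \<in> unit_combination_sqnorms (\<lambda>(i,j). column i (U j)) (UNIV \<times> {..<L})"
  then obtain c where c: "(\<Sum>t\<in>UNIV \<times> {..<L}. (cmod (c t))\<^sup>2) = 1"
    and x: "x = (norm (\<Sum>t\<in>UNIV \<times> {..<L}. c t *s (\<lambda>(i,j). column i (U j)) t))\<^sup>2"
    unfolding unit_combination_sqnorms_def by blast
  define a where "a j = (\<chi> i. c (i, j))" for j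
  have "(\<Sum>t\<in>UNIV \<times> {..<L}. c t *s (\<lambda>(i,j). column i (U j)) t)
      = (\<Sum>i\<in>UNIV. \<Sum>j<L. c (i, j) *s column i (U j))"
    by (simp add: sum.cartesian_product case_prod_unfold)
  also have "\<dots> = (\<Sum>j<L. U j *v a j)"
    by (subst sum.swap) (simp add: matrix_mult_sum a_def)
  finally have "x = (norm (\<Sum>j<L. U j *v a j))\<^sup>2" by (simp add: x)
  also have "\<dots> \<le> (\<Sum>j<L. norm (U j *v a j))\<^sup>2"
    by (simp add: norm_sum power_mono)
  also have "\<dots> \<le> (\<Sum>j<L. (norm (U j *v a j))\<^sup>2) * real L"
    using sum_squared_le_sum_of_squares[of "\<lambda>j. norm (U j *v a j)" "{..<L}"] by simp
  also have "(\<Sum>j<L. (norm (U j *v a j))\<^sup>2) = (\<Sum>j<L. \<Sum>i\<in>UNIV. (cmod (c (i, j)))\<^sup>2)"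
    by (simp add: unitary_mat_norm_preserving assms(2) power2_norm_vec a_def)
  also have "\<dots> = 1"
    using c by (subst sum.swap) (simp add: sum.cartesian_product case_prod_unfold)
  finally show "x \<le> real L" by simp
qed

definition max_sigma1_sq :: "('a \<Rightarrow> complex^'n) \<Rightarrow> 'a set \<Rightarrow> nat \<Rightarrow> real" where
  "max_sigma1_sq v I k = Max {sigma1_sq v T | T. T \<subseteq> I \<and> card T = k + 1}"

lemma calS_eq_max_sigma1_sq:
  "calS U L = max_sigma1_sq (\<lambda>(i, j). column i (U j)) (UNIV \<times> {..<L})"
  by (simp add: fun_eq_iff calS_def max_sigma1_sq_def)

lemma finite_sigma1_sq_of_subsets:
  assumes "finite I"
  shows "finite {sigma1_sq v T | T. T \<subseteq> I \<and> P T}"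
proof -
  have "{sigma1_sq v T | T. T \<subseteq> I \<and> P T} \<subseteq> sigma1_sq v ` Pow I" by blast
  thus ?thesis using assms finite_subset by blast
qed

lemma sigma1_sq_le_max_sigma1_sq:
  assumes "finite I" "T \<subseteq> I" "card T = Suc k"
  shows "sigma1_sq v T \<le> max_sigma1_sq v I k"
  unfolding max_sigma1_sq_def
  by (rule Max_ge[OF finite_sigma1_sq_of_subsets[OF assms(1)]]) (use assms(2,3) in auto)

lemma max_sigma1_sq_attained:
  assumes "finite I" "Suc k \<le> card I"
  obtains T where "T \<subseteq> I" "card T = Suc k" "max_sigma1_sq v I k = sigma1_sq v T"
proof -
  obtain T0 where "T0 \<subseteq> I" "card T0 = Suc k"
    using assms(2) by (rule obtain_subset_with_card_n)
  hence "{sigma1_sq v T | T. T \<subseteq> I \<and> card T = k + 1} \<noteq> {}" by auto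
  from Max_in[OF finite_sigma1_sq_of_subsets[OF assms(1)] this] that show ?thesis
    unfolding max_sigma1_sq_def by auto
qed

lemma max_sigma1_sq_0:
  assumes "finite I" "I \<noteq> {}" "\<And>t. t \<in> I \<Longrightarrow> norm (v t) = 1"
  shows "max_sigma1_sq v I 0 = 1"
proof -
  have "Suc 0 \<le> card I" using assms(1,2) by (simp add: Suc_leI card_gt_0_iff)
  then obtain T where "T \<subseteq> I" "card T = 1" "max_sigma1_sq v I 0 = sigma1_sq v T"
    using max_sigma1_sq_attained[OF assms(1)] by (metis One_nat_def)
  thus ?thesis using assms(3) by (auto simp: card_1_singleton_iff sigma1_sq_singleton)
qed

lemma max_sigma1_sq_mono:
  assumes "finite I" "Suc k < card I"
  shows "max_sigma1_sq v I k \<le> max_sigma1_sq v I (Suc k)"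
proof -
  obtain T where T: "T \<subseteq> I" "card T = Suc k" "max_sigma1_sq v I k = sigma1_sq v T"
    using max_sigma1_sq_attained[OF assms(1)] assms(2) by (metis less_imp_le)
  then obtain x where x: "x \<in> I" "x \<notin> T" using assms(2) by (metis less_irrefl subsetI subset_antisym)
  have "finite T" "T \<noteq> {}" using T assms(1) finite_subset by auto
  hence "sigma1_sq v T \<le> sigma1_sq v (insert x T)"
    by (intro sigma1_sq_mono) auto
  also have "\<dots> \<le> max_sigma1_sq v I (Suc k)"
    using T x \<open>finite T\<close> by (intro sigma1_sq_le_max_sigma1_sq[OF assms(1)]) auto
  finally show ?thesis using T(3) by simp
qed

lemma max_sigma1_sq_card:
  assumes "finite I" "I \<noteq> {}"
  shows "max_sigma1_sq v I (card I - 1) = sigma1_sq v I"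
proof -
  have "Suc (card I - 1) = card I" using assms by (simp add: card_gt_0_iff)
  then obtain T where "T \<subseteq> I" "card T = card I" "max_sigma1_sq v I (card I - 1) = sigma1_sq v T"
    using max_sigma1_sq_attained[OF assms(1)] by (metis order_refl)
  thus ?thesis using card_subset_eq[OF assms(1)] by metis
qed

lemma mset_subset_eq_add_mset_notin:
  assumes "M \<subseteq># add_mset a N" "a \<notin># M"
  shows "M \<subseteq># N"
  unfolding subseteq_mset_def
proof
  fix y
  have "count M y \<le> count (add_mset a N) y" using assms(1) by (simp add: subseteq_mset_def)
  thus "count M y \<le> count N y" using assms(2) by (cases "y = a") (auto simp: not_in_iff)
qed

lemma subset_image_mset_mset_set:
  assumes "finite A" "M \<subseteq># image_mset f (mset_set A)"
  shows "\<exists>T\<subseteq>A. M = image_mset f (mset_set T)"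
  using assms
proof (induction A arbitrary: M rule: finite_induct)
  case empty thus ?case by simp
next
  case (insert x F)
  have image_insert: "image_mset f (mset_set (insert x F)) = add_mset (f x) (image_mset f (mset_set F))"
    using insert.hyps by simp
  show ?case
  proof (cases "f x \<in># M")
    case True
    hence "add_mset (f x) (M - {#f x#}) \<subseteq># add_mset (f x) (image_mset f (mset_set F))"
      using insert.prems image_insert by simp
    hence "M - {#f x#} \<subseteq># image_mset f (mset_set F)"
      by (simp only: mset_subset_eq_add_mset_cancel)
    then obtain T where T: "T \<subseteq> F" "M - {#f x#} = image_mset f (mset_set T)"
      using insert.IH by blast
    have "finite T" "x \<notin> T" using T insert.hyps finite_subset by auto
    hence "M = image_mset f (mset_set (insert x T))"
      using True T(2) by (metis image_mset_add_mset insert_DiffM mset_set.insert)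
    thus ?thesis using T(1) by blast
  next
    case False
    hence "M \<subseteq># image_mset f (mset_set F)"
      using mset_subset_eq_add_mset_notin[of M "f x"] insert.prems image_insert by simp
    thus ?thesis using insert.IH by blast
  qed
qed

lemma sum_mset_le_sum_take_sorted:
  fixes w :: "'a::{linorder, ordered_comm_monoid_add} list"
  assumes "sorted_wrt (\<ge>) w" "M \<subseteq># mset w"
  shows "sum_mset M \<le> sum_list (take (size M) w)"
  using assms
proof (induction w arbitrary: M)
  case Nil thus ?case by simp
next
  case (Cons a w)
  have sorted: "sorted_wrt (\<ge>) w" and a_max: "\<forall>b\<in>set w. b \<le> a" using Cons.prems(1) by auto
  show ?case
  proof (cases "M = {#}")
    case True thus ?thesis by simp
  next
    case False
    then obtain b where b: "b \<in># M" by blast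
    define b' where "b' = (if a \<in># M then a else b)"
    have "b' \<in># M" using b by (simp add: b'_def)
    have "M - {#b'#} \<subseteq># mset w"
    proof (cases "a \<in># M")
      case True
      hence "add_mset a (M - {#a#}) \<subseteq># add_mset a (mset w)" using Cons.prems(2) by simp
      thus ?thesis using True by (simp only: mset_subset_eq_add_mset_cancel b'_def if_True)
    next
      case False
      hence "M \<subseteq># mset w" using mset_subset_eq_add_mset_notin Cons.prems(2) by simp
      thus ?thesis using diff_subset_eq_self subset_mset.order_trans by blast
    qed
    hence "sum_mset (M - {#b'#}) \<le> sum_list (take (size M - 1) w)"
      using Cons.IH[OF sorted] size_Diff_singleton[OF \<open>b' \<in># M\<close>] by metis
    moreover have "b' \<in># mset (a # w)"
      using mset_subset_eqD[OF Cons.prems(2) \<open>b' \<in># M\<close>] .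
    hence "b' \<le> a" using a_max by auto
    moreover have "sum_mset M = b' + sum_mset (M - {#b'#})" "size M = Suc (size M - 1)"
      using \<open>b' \<in># M\<close> False by (simp_all add: sum_mset.remove nonempty_has_size)
    ultimately show ?thesis by (metis add_mono take_Suc_Cons sum_list.Cons)
  qed
qed

lemma sum_list_take_le_sum_list_take_sorted:
  fixes zs :: "'a::{linorder, ordered_comm_monoid_add} list"
  shows "sum_list (take n zs) \<le> sum_list (take n (rev (sort zs)))"
proof -
  have "mset (take n zs) \<subseteq># mset (rev (sort zs))"
    by (metis append_take_drop_id mset_append mset_rev mset_sort mset_subset_eq_add_left)
  from sum_mset_le_sum_take_sorted[OF _ this] show ?thesis
    by (cases "length zs \<le> n") (simp_all add: sum_mset_sum_list sorted_wrt_rev min_def)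
qed

lemma sum_list_take_le_of_subset_sums:
  assumes "finite I" "mset xs = image_mset f (mset_set I)" "k \<le> card I"
    and "\<And>T. T \<subseteq> I \<Longrightarrow> card T = k \<Longrightarrow> sum f T \<le> B"
  shows "sum_list (take k xs) \<le> B"
proof -
  have "mset (take k xs) \<subseteq># image_mset f (mset_set I)"
    using assms(2) by (metis append_take_drop_id mset_append mset_subset_eq_add_left)
  then obtain T where T: "T \<subseteq> I" "mset (take k xs) = image_mset f (mset_set T)"
    using subset_image_mset_mset_set[OF assms(1)] by blast
  have "length xs = card I" using assms(2) by (metis size_image_mset size_mset size_mset_set)
  hence "card T = k"
    using T(2) assms(1,3) finite_subset[OF T(1)]
    by (metis length_take min_absorb2 size_image_mset size_mset size_mset_set)
  have "sum_list (take k xs) = sum f T"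
    by (simp add: sum_mset_sum_list[symmetric] T(2) sum_unfold_sum_mset)
  thus ?thesis using assms(4)[OF T(1) \<open>card T = k\<close>] by simp
qed

lemma sum_list_take_increments:
  fixes s :: "nat \<Rightarrow> 'a::ab_group_add"
  assumes "k < N"
  shows "sum_list (take (Suc k) (s 0 # map (\<lambda>k. s k - s (k - 1)) [1..<N])) = s k"
  using assms
proof (induction k)
  case 0 thus ?case by simp
next
  case (Suc k)
  have "(s 0 # map (\<lambda>k. s k - s (k - 1)) [1..<N]) ! Suc k = s (Suc k) - s k"
    using Suc.prems nth_upt[of 1 k N] by simp
  thus ?case using Suc by (simp add: take_Suc_conv_app_nth algebra_simps del: take_Suc_Cons)
qed

section \<open>Karamata's inequality for \<open>x ln x\<close>\<close>

lemma xlnx_tangent_le: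
  fixes x y :: real
  assumes "x > 0" "y \<ge> 0"
  shows "x * ln x + (ln x + 1) * (y - x) \<le> y * ln y"
proof (cases "y = 0")
  case True thus ?thesis using assms by (simp add: algebra_simps)
next
  case False
  hence "y > 0" using assms by simp
  have "ln (x / y) \<le> x / y - 1" using assms \<open>y > 0\<close> by (intro ln_le_minus_one) simp
  hence "y * (ln x - ln y) \<le> y * (x / y - 1)"
    using assms \<open>y > 0\<close> by (intro mult_left_mono) (simp_all add: ln_div)
  thus ?thesis using \<open>y > 0\<close> by (simp add: algebra_simps)
qed

lemma abel_summation_le:
  fixes c d :: "nat \<Rightarrow> real"
  assumes "\<And>i j. i \<le> j \<Longrightarrow> j \<le> n \<Longrightarrow> c j \<le> c i"
    and "\<And>k. k \<le> n \<Longrightarrow> 0 \<le> (\<Sum>i<k. d i)"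
  shows "c n * (\<Sum>i<n. d i) \<le> (\<Sum>i<n. c i * d i)"
  using assms
proof (induction n)
  case 0 thus ?case by simp
next
  case (Suc n)
  have "c (Suc n) * (\<Sum>i<Suc n. d i) \<le> c n * (\<Sum>i<Suc n. d i)"
    using Suc.prems(1)[of n "Suc n"] Suc.prems(2)[of "Suc n"] by (intro mult_right_mono) auto
  also have "\<dots> = c n * (\<Sum>i<n. d i) + c n * d n" by (simp add: algebra_simps)
  also have "\<dots> \<le> (\<Sum>i<n. c i * d i) + c n * d n" using Suc by simp
  finally show ?case by simp
qed

text \<open>Add up the tangent lines of \<open>x ln x\<close> at the \<open>x i\<close>; their slopes \<open>ln (x i) + 1\<close> decrease,
  so Abel summation shows the correction terms are nonnegative.\<close>
lemma karamata_xlnx_pos: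
  fixes x y :: "nat \<Rightarrow> real"
  assumes "\<And>i. i < n \<Longrightarrow> 0 < x i" "\<And>i. i < n \<Longrightarrow> 0 \<le> y i"
    and "\<And>i j. i \<le> j \<Longrightarrow> j < n \<Longrightarrow> x j \<le> x i"
    and "\<And>k. k \<le> n \<Longrightarrow> (\<Sum>i<k. x i) \<le> (\<Sum>i<k. y i)"
    and "(\<Sum>i<n. x i) = (\<Sum>i<n. y i)"
  shows "(\<Sum>i<n. x i * ln (x i)) \<le> (\<Sum>i<n. y i * ln (y i))"
proof (cases n)
  case 0 thus ?thesis by simp
next
  case (Suc m)
  define c where "c i = ln (x (min i m)) + 1" for i
  have c_decreasing: "c j \<le> c i" if "i \<le> j" "j \<le> n" for i j
    unfolding c_def using assms(1,3) that Suc by (auto simp: min_def)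
  have "c n * (\<Sum>i<n. y i - x i) \<le> (\<Sum>i<n. c i * (y i - x i))"
    by (rule abel_summation_le[OF c_decreasing]) (use assms(4) in \<open>auto simp: sum_subtractf\<close>)
  hence "0 \<le> (\<Sum>i<n. c i * (y i - x i))" using assms(5) by (simp add: sum_subtractf)
  moreover have "(\<Sum>i<n. x i * ln (x i) + c i * (y i - x i)) \<le> (\<Sum>i<n. y i * ln (y i))"
  proof (rule sum_mono)
    fix i assume "i \<in> {..<n}"
    hence "c i = ln (x i) + 1" "0 < x i" "0 \<le> y i" using Suc assms(1,2) by (auto simp: c_def min_def)
    thus "x i * ln (x i) + c i * (y i - x i) \<le> y i * ln (y i)" using xlnx_tangent_le by simp
  qed
  ultimately show ?thesis by (simp add: sum.distrib)
qed

text \<open>Trailing zeros of \<open>x\<close> force the corresponding \<open>y i\<close> to vanish as well.\<close>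
lemma karamata_xlnx:
  fixes x y :: "nat \<Rightarrow> real"
  assumes "\<And>i. i < n \<Longrightarrow> 0 \<le> x i" "\<And>i. i < n \<Longrightarrow> 0 \<le> y i"
    and "\<And>i j. i \<le> j \<Longrightarrow> j < n \<Longrightarrow> x j \<le> x i"
    and "\<And>k. k \<le> n \<Longrightarrow> (\<Sum>i<k. x i) \<le> (\<Sum>i<k. y i)"
    and "(\<Sum>i<n. x i) = (\<Sum>i<n. y i)"
  shows "(\<Sum>i<n. x i * ln (x i)) \<le> (\<Sum>i<n. y i * ln (y i))"
  using assms
proof (induction n)
  case 0 thus ?case by simp
next
  case (Suc n)
  show ?case
  proof (cases "x n > 0")
    case True
    hence "0 < x i" if "i < Suc n" for i
      using Suc.prems(3)[of i n] that by simp
    thus ?thesis by (rule karamata_xlnx_pos) (use Suc.prems in auto)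
  next
    case False
    hence "x n = 0" using Suc.prems(1)[of n] by simp
    moreover have "y n = 0"
      using Suc.prems(2)[of n] Suc.prems(4)[of n] Suc.prems(5) \<open>x n = 0\<close> by simp
    moreover have "(\<Sum>i<n. x i * ln (x i)) \<le> (\<Sum>i<n. y i * ln (y i))"
      by (rule Suc.IH) (use Suc.prems \<open>x n = 0\<close> \<open>y n = 0\<close> in auto)
    ultimately show ?thesis by simp
  qed
qed

lemma sum_list_map_eq_sum_nth: "sum_list (map f xs) = (\<Sum>i<length xs. f (xs ! i))"
proof -
  have "sum_list (map f xs) = (\<Sum>i<length xs. map f xs ! i)"
    by (simp add: sum_list_sum_nth atLeast0LessThan)
  also have "\<dots> = (\<Sum>i<length xs. f (xs ! i))"
    by (rule sum.cong) simp_all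
  finally show ?thesis .
qed

lemma sum_list_take_eq_sum_nth:
  "k \<le> length xs \<Longrightarrow> sum_list (take k xs) = (\<Sum>i<k. xs ! i)"
  by (simp add: sum_list_map_eq_sum_nth[of id, simplified] min_absorb1)

lemma sum_list_map_rev_sort:
  fixes f :: "'a::linorder \<Rightarrow> 'b::comm_monoid_add"
  shows "sum_list (map f (rev (sort xs))) = sum_list (map f xs)"
proof -
  have "mset (map f (rev (sort xs))) = mset (map f xs)" by simp
  thus ?thesis by (metis sum_mset_sum_list)
qed

lemma sum_list_xlnx_le_of_majorized:
  assumes "majorized xs ys" "\<forall>x\<in>set xs. 0 \<le> x" "\<forall>y\<in>set ys. 0 \<le> y"
  shows "sum_list (map (\<lambda>x. x * ln x) xs) \<le> sum_list (map (\<lambda>y. y * ln y) ys)"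
proof -
  define X where "X = rev (sort xs)"
  define Y where "Y = rev (sort ys)"
  define n where "n = length xs"
  have len: "length X = n" "length Y = n"
    using assms(1) by (simp_all add: X_def Y_def n_def majorized_def)
  have sums: "sum_list (take k X) \<le> sum_list (take k Y)" if "k \<le> n" for k
    using assms(1) that by (simp add: majorized_def X_def Y_def n_def)
  have "sum_list (map (\<lambda>x. x * ln x) xs) = (\<Sum>i<n. X ! i * ln (X ! i))"
    using sum_list_map_rev_sort[of "\<lambda>x. x * ln x" xs] len
    unfolding sum_list_map_eq_sum_nth X_def by simp
  also have "\<dots> \<le> (\<Sum>i<n. Y ! i * ln (Y ! i))"
  proof (rule karamata_xlnx)
    show "0 \<le> X ! i" "0 \<le> Y ! i" if "i < n" for i
      using assms(2,3) nth_mem[of i X] nth_mem[of i Y] that len by (auto simp: X_def Y_def)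
    show "X ! j \<le> X ! i" if "i \<le> j" "j < n" for i j
      using sorted_nth_mono[OF sorted_sort, of "n - 1 - j" "n - 1 - i" xs] that len
      by (simp add: X_def rev_nth)
    show "(\<Sum>i<k. X ! i) \<le> (\<Sum>i<k. Y ! i)" if "k \<le> n" for k
      using sums[OF that] that len by (simp add: sum_list_take_eq_sum_nth)
    have "sum_list X = sum_list Y"
      using assms(1) sum_list_map_rev_sort[of id xs] sum_list_map_rev_sort[of id ys]
      by (simp add: majorized_def X_def Y_def)
    thus "(\<Sum>i<n. X ! i) = (\<Sum>i<n. Y ! i)"
      using len by (simp add: sum_list_map_eq_sum_nth[of id, simplified])
  qed
  also have "\<dots> = sum_list (map (\<lambda>y. y * ln y) ys)"
    using sum_list_map_rev_sort[of "\<lambda>y. y * ln y" ys] len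
    unfolding sum_list_map_eq_sum_nth Y_def by simp
  finally show ?thesis .
qed

section \<open>Majorization of the overlap weights\<close>

lemma increments_max_sigma1_sq_nonneg:
  assumes "finite I"
  shows "\<forall>y\<in>set (1 # map (\<lambda>k. max_sigma1_sq v I k - max_sigma1_sq v I (k - 1)) [1..<card I]). 0 \<le> y"
proof -
  have "max_sigma1_sq v I (k - 1) \<le> max_sigma1_sq v I k" if "1 \<le> k" "k < card I" for k
    using max_sigma1_sq_mono[OF assms, of "k - 1" v] that by simp
  thus ?thesis by auto
qed

lemma majorized_braket_weights:
  fixes v :: "'a \<Rightarrow> complex^'n"
  assumes "finite I" "I \<noteq> {}" "norm psi = 1" "\<And>t. t \<in> I \<Longrightarrow> norm (v t) = 1"
    and "(\<Sum>t\<in>I. (cmod (braket (v t) psi))\<^sup>2) = sigma1_sq v I"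
  defines "p \<equiv> \<lambda>t. (cmod (braket (v t) psi))\<^sup>2" and "S \<equiv> max_sigma1_sq v I"
  shows "majorized (sorted_list_of_multiset (image_mset p (mset_set I)))
                   (1 # map (\<lambda>k. S k - S (k - 1)) [1..<card I])"
proof -
  define xs where "xs = sorted_list_of_multiset (image_mset p (mset_set I))"
  define ys where "ys = S 0 # map (\<lambda>k. S k - S (k - 1)) [1..<card I]"
  have ys: "1 # map (\<lambda>k. S k - S (k - 1)) [1..<card I] = ys"
    using max_sigma1_sq_0[OF assms(1,2,4)] by (simp add: ys_def S_def)
  have N: "card I \<ge> 1" using assms(1,2) by (simp add: Suc_leI card_gt_0_iff)
  have mset_xs: "mset (rev (sort xs)) = image_mset p (mset_set I)" by (simp add: xs_def)
  have len: "length xs = card I" "length ys = card I"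
    using N assms(1) by (simp_all add: xs_def ys_def flip: size_mset)
  have partial_sums: "sum_list (take n (rev (sort xs))) \<le> sum_list (take n ys)" if "n \<le> card I" for n
  proof (cases n)
    case (Suc k)
    have "sum_list (take n (rev (sort xs))) \<le> S k"
    proof (rule sum_list_take_le_of_subset_sums[OF assms(1) mset_xs that])
      fix T assume "T \<subseteq> I" "card T = n"
      hence "finite T" "T \<noteq> {}" using assms(1) Suc finite_subset by auto
      hence "sum p T \<le> sigma1_sq v T"
        unfolding p_def by (rule sum_sqnorm_braket_le_sigma1_sq[OF _ _ assms(3)])
      also have "\<dots> \<le> S k"
        unfolding S_def using \<open>T \<subseteq> I\<close> \<open>card T = n\<close> Suc
        by (intro sigma1_sq_le_max_sigma1_sq[OF assms(1)]) auto
      finally show "sum p T \<le> S k" .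
    qed
    also have "S k = sum_list (take n ys)"
      using sum_list_take_increments[of k "card I" S] that Suc by (simp add: ys_def)
    finally show ?thesis .
  qed simp
  have "sum_list xs = sum p I" by (simp add: xs_def sum_mset_sum_list[symmetric] sum_unfold_sum_mset)
  also have "\<dots> = S (card I - 1)"
    using assms(5) max_sigma1_sq_card[OF assms(1,2), of v] by (simp add: p_def S_def)
  also have "\<dots> = sum_list ys"
    using sum_list_take_increments[of "card I - 1" "card I" S] N len by (simp add: ys_def)
  finally have "sum_list xs = sum_list ys" .
  with partial_sums len show ?thesis
    unfolding majorized_def ys xs_def[symmetric]
    using sum_list_take_le_sum_list_take_sorted order_trans by fastforce
qed

lemma sum_sqnorm_braket_columns_eq_sigma1_sq:
  fixes U :: "nat \<Rightarrow> complex^'n^'n"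
  assumes "L \<ge> 1" "\<And>j. j < L \<Longrightarrow> unitary_mat (U j)" "norm psi = 1"
  defines "v \<equiv> \<lambda>(i, j). column i (U j)"
  shows "(\<Sum>t\<in>UNIV \<times> {..<L}. (cmod (braket (v t) psi))\<^sup>2) = sigma1_sq v (UNIV \<times> {..<L})"
proof (rule antisym)
  have "(undefined, 0) \<in> UNIV \<times> {..<L}" using assms(1) by simp
  thus "(\<Sum>t\<in>UNIV \<times> {..<L}. (cmod (braket (v t) psi))\<^sup>2) \<le> sigma1_sq v (UNIV \<times> {..<L})"
    by (intro sum_sqnorm_braket_le_sigma1_sq[OF _ _ assms(3)]) auto
  have "(\<Sum>t\<in>UNIV \<times> {..<L}. (cmod (braket (v t) psi))\<^sup>2)
      = (\<Sum>i\<in>UNIV. \<Sum>j<L. (cmod (braket (column i (U j)) psi))\<^sup>2)"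
    by (simp add: v_def sum.cartesian_product case_prod_unfold)
  also have "\<dots> = (\<Sum>j<L. \<Sum>i\<in>UNIV. (cmod (braket (column i (U j)) psi))\<^sup>2)"
    by (rule sum.swap)
  also have "\<dots> = real L"
    using assms(2,3) by (simp add: unitary_mat_parseval)
  finally show "sigma1_sq v (UNIV \<times> {..<L}) \<le> (\<Sum>t\<in>UNIV \<times> {..<L}. (cmod (braket (v t) psi))\<^sup>2)"
    unfolding v_def using sigma1_sq_columns_le[OF assms(1,2)] by simp
qed

lemma sum_shannon_H_eq_sum_list:
  fixes p :: "'n::finite \<times> nat \<Rightarrow> real"
  shows "(\<Sum>j<L. shannon_H (\<lambda>i. p (i, j)) UNIV)
       = - sum_list (map (\<lambda>x. x * ln x) (sorted_list_of_multiset (image_mset p (mset_set (UNIV \<times> {..<L})))))"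
proof -
  have "(\<Sum>j<L. shannon_H (\<lambda>i. p (i, j)) UNIV) = - (\<Sum>i\<in>UNIV. \<Sum>j<L. p (i, j) * ln (p (i, j)))"
    by (simp add: shannon_H_def sum_negf sum.swap[of _ "{..<L}"])
  also have "\<dots> = - (\<Sum>t\<in>UNIV \<times> {..<L}. p t * ln (p t))"
    by (simp add: sum.cartesian_product case_prod_unfold)
  finally show ?thesis
    by (simp add: sum_mset_sum_list[symmetric] sum_unfold_sum_mset multiset.map_comp o_def)
qed

lemma sum_list_xlnx_increments:
  fixes s :: "nat \<Rightarrow> real"
  shows "sum_list (map (\<lambda>y. y * ln y) (1 # map (\<lambda>k. s k - s (k - 1)) [1..<N]))
       = (\<Sum>k=1..N - 1. (s k - s (k - 1)) * ln (s k - s (k - 1)))"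
proof -
  have "{1..<N} = {1..N - 1}" by auto
  thus ?thesis by (simp add: sum_set_upt_conv_sum_list_nat[symmetric])
qed

theorem mainTheorem7:
  fixes U :: "nat \<Rightarrow> complex^'n^'n" and L :: nat and psi :: "complex^'n"
  assumes "L \<ge> 1"
    and "\<And>j. j < L \<Longrightarrow> unitary_mat (U j)"
    and "norm psi = 1"
  defines "p \<equiv> (\<lambda>(i::'n, j::nat). (cmod (braket (column i (U j)) psi))^2)"
    and "d \<equiv> CARD('n)"
    and "S \<equiv> calS U L"
  shows "majorized
           (sorted_list_of_multiset (image_mset p (mset_set ((UNIV :: 'n set) \<times> {..<L}))))
           (1 # map (\<lambda>k. S k - S (k - 1)) [1..<d * L])
       \<and> (\<Sum>j<L. shannon_H (\<lambda>i. p (i, j)) UNIV)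
           \<ge> - (\<Sum>k=1..d * L - 1. (S k - S (k - 1)) * ln (S k - S (k - 1)))"
proof -
  define v where "v = (\<lambda>(i::'n, j::nat). column i (U j))"
  define I where "I = (UNIV :: 'n set) \<times> {..<L}"
  let ?xs = "sorted_list_of_multiset (image_mset p (mset_set I))"
  let ?ys = "1 # map (\<lambda>k. S k - S (k - 1)) [1..<d * L]"
  have "(undefined, 0) \<in> I" using assms(1) by (simp add: I_def)
  hence I: "finite I" "I \<noteq> {}" "card I = d * L"
    by (auto simp: I_def d_def card_cartesian_product)
  have unit: "norm (v t) = 1" if "t \<in> I" for t
    using that assms(2) unitary_mat_column_norm by (auto simp: v_def I_def)
  have p: "p = (\<lambda>t. (cmod (braket (v t) psi))\<^sup>2)" and S: "S = max_sigma1_sq v I"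
    by (simp_all add: p_def v_def S_def I_def calS_eq_max_sigma1_sq case_prod_unfold)
  have maj: "majorized ?xs ?ys"
    using majorized_braket_weights[OF I(1,2) assms(3) unit]
      sum_sqnorm_braket_columns_eq_sigma1_sq[OF assms(1-3)]
    unfolding p S I(3) by (simp add: v_def I_def)
  moreover have "sum_list (map (\<lambda>x. x * ln x) ?xs) \<le> sum_list (map (\<lambda>y. y * ln y) ?ys)"
    using sum_list_xlnx_le_of_majorized[OF maj] increments_max_sigma1_sq_nonneg[OF I(1)]
    by (auto simp: p S I(1,3))
  ultimately show ?thesis
    using sum_shannon_H_eq_sum_list[of p L] sum_list_xlnx_increments[of S "d * L"]
    by (simp add: I_def)
qed

end
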